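(* Let $T$ be a uniformly random spanning tree of $K_n$ and let $k,\ell\in \mathbb N$ satisfy $k+\ell\le n$. Then $$\Pr\big(E(T)\cap \{v_iv_j: i\le k,\ n-\ell< j\le n\} = \emptyset\big) = \frac{(n-k)^{\ell-1}(n-\ell)^{k-1}(n-k-\ell)}{n^{k+\ell-1}}.$$
   Context: $K_n$ is the complete graph on vertex set $V_n=\{v_1,\dots,v_n\}$. *)

theory Defs
  imports "HOL-Probability.Probability"
begin

text \<open>Simple graphs on a vertex set of naturals; an edge is a 2-element set {x,y}, x \<noteq> y.
  The complete graph K_n has vertex set V_n = {1..n} (vertex v_i is the number i).\<close>

definition complete_edges :: "nat \<Rightarrow> nat set set" where
  "complete_edges n = {{i, j} | i j. i \<in> {1..n} \<and> j \<in> {1..n} \<and> i \<noteq> j}"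

definition adj_rel :: "'a set set \<Rightarrow> ('a \<times> 'a) set" where
  "adj_rel F = {(x, y). {x, y} \<in> F}"

definition graph_connected :: "'a set \<Rightarrow> 'a set set \<Rightarrow> bool" where
  "graph_connected V F \<longleftrightarrow> (\<forall>u\<in>V. \<forall>v\<in>V. (u, v) \<in> (adj_rel F)\<^sup>*)"

definition is_cycle :: "'a set set \<Rightarrow> 'a list \<Rightarrow> bool" where
  "is_cycle F vs \<longleftrightarrow> length vs \<ge> 3 \<and> distinct vs \<and>
     (\<forall>i < length vs. {vs ! i, vs ! ((i + 1) mod length vs)} \<in> F)"

definition graph_acyclic :: "'a set set \<Rightarrow> bool" where
  "graph_acyclic F \<longleftrightarrow> (\<nexists>vs. is_cycle F vs)"

definition is_tree :: "'a set \<Rightarrow> 'a set set \<Rightarrow> bool" where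
  "is_tree V F \<longleftrightarrow> V \<noteq> {} \<and> F \<subseteq> {{x, y} | x y. x \<in> V \<and> y \<in> V \<and> x \<noteq> y}
     \<and> graph_connected V F \<and> graph_acyclic F"

definition spanning_trees_K :: "nat \<Rightarrow> nat set set set" where
  "spanning_trees_K n = {F. F \<subseteq> complete_edges n \<and> is_tree {1..n} F}"

end

theory Submission
  imports Defs
begin

(*
  A forest on V with root set R is encoded by its parent map on V - R; a spanning tree rooted
  at c is such a forest with R = {c}.  Giving each non-root v the weight x(parent of v), the
  total weight of all forests is x(R) x(V)^(|V - R| - 1), a weighted Cayley formula proved by
  deleting a root and turning its children into roots.

  Let C be the m = n - k - l vertices outside A = {1..k} and B = {n-l+1..n}, and root the trees
  at some c in C.  A tree avoids the edges between A and B iff its parent map sends no vertex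
  of A into B and no vertex of B into A.  Cutting it at C leaves a forest g rooted at C of the
  same kind; there are m (n-l)^(k-1) * m (n-k)^(l-1) of these.  The trees rooted at c that
  extend g are counted by the weighted formula on C, each root weighted by the size of its tree
  in g, which gives |tree of c in g| n^(m-2).  Summing over c in C shows that m times the number
  of avoiding trees is m^2 (n-l)^(k-1) (n-k)^(l-1) n^(m-1); divide by n^(n-2).  For m = 0 no
  tree avoids these edges, since A and B then cover all vertices.
*)

section \<open>Rooted forests as parent maps\<close>

definition reaches :: "('a \<Rightarrow> 'a) \<Rightarrow> 'a set \<Rightarrow> 'a \<Rightarrow> bool" where
  "reaches p R v \<longleftrightarrow> (\<exists>i. (p ^^ i) v \<in> R)"

text \<open>A forest on \<open>V\<close> with root set \<open>R\<close>, represented by the map sending every non-root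
  to its parent (and everything outside \<open>V - R\<close> to \<open>undefined\<close>); every vertex must reach
  a root by following parents.\<close>
definition rooted_forests :: "'a set \<Rightarrow> 'a set \<Rightarrow> ('a \<Rightarrow> 'a) set" where
  "rooted_forests V R = {p \<in> V - R \<rightarrow>\<^sub>E V. \<forall>v\<in>V. reaches p R v}"

definition depth :: "('a \<Rightarrow> 'a) \<Rightarrow> 'a set \<Rightarrow> 'a \<Rightarrow> nat" where
  "depth p R v = (LEAST i. (p ^^ i) v \<in> R)"

lemma reaches_base: "v \<in> R \<Longrightarrow> reaches p R v"
  unfolding reaches_def by (metis funpow_0)

lemma reaches_step: "reaches p R v \<longleftrightarrow> v \<in> R \<or> reaches p R (p v)"
proof
  assume "reaches p R v"
  then obtain i where i: "(p ^^ i) v \<in> R" by (auto simp: reaches_def)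
  then show "v \<in> R \<or> reaches p R (p v)"
    by (cases i) (auto simp: reaches_def funpow_Suc_right simp del: funpow.simps)
next
  assume "v \<in> R \<or> reaches p R (p v)"
  then show "reaches p R v"
    unfolding reaches_def by (metis comp_apply funpow_0 funpow_Suc_right)
qed

lemma reaches_mono: "reaches p R v \<Longrightarrow> R \<subseteq> Y \<Longrightarrow> reaches p Y v"
  unfolding reaches_def by blast

lemma reaches_cong:
  assumes "reaches p R v" "v \<in> Z"
    and "\<And>w. w \<in> Z \<Longrightarrow> w \<notin> R \<Longrightarrow> q w = p w \<and> p w \<in> Z"
  shows "reaches q R v"
proof -
  obtain i where "(p ^^ i) v \<in> R" using assms(1) by (auto simp: reaches_def)
  then show ?thesis
    using assms(2)
  proof (induction i arbitrary: v)
    case 0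
    then show ?case by (simp add: reaches_base)
  next
    case (Suc i)
    show ?case
    proof (cases "v \<in> R")
      case False
      with assms(3) Suc.prems(2) have "q v = p v" "p v \<in> Z" by auto
      moreover have "(p ^^ i) (p v) \<in> R"
        using Suc.prems(1) by (simp add: funpow_Suc_right del: funpow.simps)
      ultimately show ?thesis using Suc.IH reaches_step by metis
    qed (simp add: reaches_base)
  qed
qed

lemma rooted_forests_parent:
  "p \<in> rooted_forests V R \<Longrightarrow> v \<in> V \<Longrightarrow> v \<notin> R \<Longrightarrow> p v \<in> V"
  unfolding rooted_forests_def by auto

lemma rooted_forests_undefined:
  "p \<in> rooted_forests V R \<Longrightarrow> v \<notin> V - R \<Longrightarrow> p v = undefined"
  unfolding rooted_forests_def by auto

lemma rooted_forests_reaches: "p \<in> rooted_forests V R \<Longrightarrow> v \<in> V \<Longrightarrow> reaches p R v"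
  unfolding rooted_forests_def by auto

lemma rooted_forestsI:
  assumes "\<And>v. v \<in> V - R \<Longrightarrow> p v \<in> V" "\<And>v. v \<notin> V - R \<Longrightarrow> p v = undefined"
    and "\<And>v. v \<in> V \<Longrightarrow> reaches p R v"
  shows "p \<in> rooted_forests V R"
  using assms unfolding rooted_forests_def by (auto simp: PiE_iff extensional_def)

lemma rooted_forest_induct [consumes 2, case_names root parent]:
  assumes "p \<in> rooted_forests V R" "v \<in> V"
    and "\<And>v. v \<in> R \<Longrightarrow> P v"
    and "\<And>v. v \<in> V \<Longrightarrow> v \<notin> R \<Longrightarrow> P (p v) \<Longrightarrow> P v"
  shows "P v"
proof -
  obtain i where "(p ^^ i) v \<in> R"
    using rooted_forests_reaches[OF assms(1,2)] by (auto simp: reaches_def)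
  then show ?thesis
    using assms(2)
  proof (induction i arbitrary: v)
    case (Suc i)
    show ?case
    proof (cases "v \<in> R")
      case False
      have "(p ^^ i) (p v) \<in> R"
        using Suc.prems(1) by (simp add: funpow_Suc_right del: funpow.simps)
      then show ?thesis
        using Suc.IH Suc.prems(2) False assms(4) rooted_forests_parent[OF assms(1)] by blast
    qed (rule assms(3))
  qed (simp add: assms(3))
qed

lemma restrict_rooted_forest:
  assumes p: "p \<in> rooted_forests V R" and "R \<subseteq> Y" "Y \<subseteq> W" "W \<subseteq> V"
    and closed: "\<And>w. w \<in> W - Y \<Longrightarrow> p w \<in> W"
  shows "restrict p (W - Y) \<in> rooted_forests W Y"
proof (rule rooted_forestsI)
  fix v assume "v \<in> W"
  then have "reaches p R v" using assms(4) rooted_forests_reaches[OF p] by blast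
  then have "reaches p Y v" using assms(2) by (rule reaches_mono)
  moreover note \<open>v \<in> W\<close>
  moreover have "restrict p (W - Y) w = p w \<and> p w \<in> W" if "w \<in> W" "w \<notin> Y" for w
    using that closed by simp
  ultimately show "reaches (restrict p (W - Y)) Y v" by (rule reaches_cong)
qed (use closed in auto)

lemma finite_rooted_forests: "finite V \<Longrightarrow> finite (rooted_forests V R)"
  unfolding rooted_forests_def
  by (rule finite_subset[of _ "V - R \<rightarrow>\<^sub>E V"]) (auto intro: finite_PiE)

lemma rooted_forests_no_roots: "V \<noteq> {} \<Longrightarrow> rooted_forests V {} = {}"
  unfolding rooted_forests_def reaches_def by auto

lemma rooted_forests_all_roots: "rooted_forests V V = {\<lambda>_. undefined}"
  unfolding rooted_forests_def by (auto simp: reaches_base)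

context
  fixes p V R
  assumes forest: "p \<in> rooted_forests V R"
begin

lemma funpow_depth_in_roots: "v \<in> V \<Longrightarrow> (p ^^ depth p R v) v \<in> R"
  unfolding depth_def using rooted_forests_reaches[OF forest] unfolding reaches_def
  by (metis LeastI)

lemma funpow_less_depth_notin_roots: "i < depth p R v \<Longrightarrow> (p ^^ i) v \<notin> R"
  unfolding depth_def using not_less_Least by blast

lemma funpow_le_depth_in: "v \<in> V \<Longrightarrow> i \<le> depth p R v \<Longrightarrow> (p ^^ i) v \<in> V"
proof (induction i)
  case (Suc i)
  then have "(p ^^ i) v \<in> V" "(p ^^ i) v \<notin> R" using funpow_less_depth_notin_roots by auto
  then show ?case using rooted_forests_parent[OF forest] by simp
qed simp

lemma depth_root: "v \<in> R \<Longrightarrow> depth p R v = 0"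
  unfolding depth_def by (simp add: Least_eq_0)

lemma depth_parent:
  assumes "v \<in> V" "v \<notin> R"
  shows "depth p R v = Suc (depth p R (p v))"
proof -
  have "(p ^^ Suc (depth p R (p v))) v \<in> R"
    using funpow_depth_in_roots[OF rooted_forests_parent[OF forest assms]]
    by (simp add: funpow_Suc_right del: funpow.simps)
  then have le: "depth p R v \<le> Suc (depth p R (p v))"
    unfolding depth_def by (rule Least_le)
  obtain j where j: "depth p R v = Suc j"
    using funpow_depth_in_roots[OF assms(1)] assms(2) by (cases "depth p R v") auto
  then have "(p ^^ j) (p v) \<in> R"
    using funpow_depth_in_roots[OF assms(1)] by (simp add: funpow_Suc_right del: funpow.simps)
  then have "depth p R (p v) \<le> j"
    unfolding depth_def by (rule Least_le)
  with le j show ?thesis by simp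
qed

lemma parent_neq: "v \<in> V \<Longrightarrow> v \<notin> R \<Longrightarrow> p v \<noteq> v"
  using depth_parent by fastforce

lemma depth_funpow: "v \<in> V \<Longrightarrow> k \<le> depth p R v \<Longrightarrow> depth p R ((p ^^ k) v) = depth p R v - k"
proof (induction k)
  case (Suc k)
  then have "(p ^^ k) v \<in> V" "(p ^^ k) v \<notin> R"
    using funpow_le_depth_in funpow_less_depth_notin_roots by auto
  then show ?case using Suc depth_parent by simp
qed simp

end

section \<open>A weighted Cayley formula\<close>

definition forest_weight :: "('a \<Rightarrow> real) \<Rightarrow> 'a set \<Rightarrow> 'a set \<Rightarrow> real" where
  "forest_weight x V R = (\<Sum>p\<in>rooted_forests V R. \<Prod>v\<in>V - R. x (p v))"

lemma delete_root_forest: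
  assumes p: "p \<in> rooted_forests V R" and r: "r \<in> R"
  shows "restrict p (V - R - {v \<in> V - R. p v = r})
    \<in> rooted_forests (V - {r}) (R - {r} \<union> {v \<in> V - R. p v = r})"
proof -
  define S where "S = {v \<in> V - R. p v = r}"
  define q where "q = restrict p (V - R - S)"
  have "v \<noteq> r \<longrightarrow> reaches q (R - {r} \<union> S) v" if "v \<in> V" for v
    using p that
  proof (induction rule: rooted_forest_induct)
    case (parent v)
    show ?case
    proof (cases "v \<in> S")
      case False
      then have "q v = p v" "p v \<noteq> r" using parent.hyps by (auto simp: q_def S_def)
      then show ?thesis using parent.IH reaches_step by metis
    qed (simp add: reaches_base)
  qed (auto intro: reaches_base)
  moreover have "V - {r} - (R - {r} \<union> S) = V - R - S" using r by auto
  ultimately have "q \<in> rooted_forests (V - {r}) (R - {r} \<union> S)"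
    using r by (intro rooted_forestsI) (auto simp: q_def S_def rooted_forests_parent[OF p])
  then show ?thesis by (simp add: q_def S_def)
qed

lemma attach_root_forest:
  assumes r: "r \<in> R" and RV: "R \<subseteq> V" and S: "S \<subseteq> V - R"
    and q: "q \<in> rooted_forests (V - {r}) (R - {r} \<union> S)"
  shows "(\<lambda>v. if v \<in> S then r else q v) \<in> rooted_forests V R"
proof -
  define p where "p = (\<lambda>v. if v \<in> S then r else q v)"
  have "reaches p R v" if "v \<in> V - {r}" for v
    using q that
  proof (induction rule: rooted_forest_induct)
    case (root v)
    then show ?case
      using r reaches_step[of p R v] by (auto simp: p_def reaches_base)
  next
    case (parent v)
    then show ?case
      using reaches_step[of p R v] by (auto simp: p_def)
  qed
  then have "reaches p R v" if "v \<in> V" for v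
    using that r by (cases "v = r") (auto simp: reaches_base)
  moreover have "p v \<in> V" if "v \<in> V - R" for v
    using that S r RV rooted_forests_parent[OF q, of v] by (auto simp: p_def)
  moreover have "p v = undefined" if "v \<notin> V - R" for v
    using that S rooted_forests_undefined[OF q, of v] by (auto simp: p_def)
  ultimately show ?thesis
    unfolding p_def[symmetric] by (intro rooted_forestsI) auto
qed

text \<open>Deleting a root \<open>r\<close> turns its children \<open>S\<close> into roots.\<close>
lemma bij_betw_delete_root:
  assumes r: "r \<in> R" and RV: "R \<subseteq> V"
  shows "bij_betw (\<lambda>p. ({v \<in> V - R. p v = r}, restrict p (V - R - {v \<in> V - R. p v = r})))
           (rooted_forests V R) (SIGMA S:Pow (V - R). rooted_forests (V - {r}) (R - {r} \<union> S))"
    (is "bij_betw ?cut _ ?Sigma")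
proof (rule bij_betw_byWitness[where f' = "\<lambda>(S, q) v. if v \<in> S then r else q v"])
  show "\<forall>p\<in>rooted_forests V R. (\<lambda>(S, q) v. if v \<in> S then r else q v) (?cut p) = p"
  proof (intro ballI ext)
    fix p v assume "p \<in> rooted_forests V R"
    then show "(\<lambda>(S, q) v. if v \<in> S then r else q v) (?cut p) v = p v"
      by (cases "v \<in> V - R") (auto simp: rooted_forests_undefined)
  qed
  show "\<forall>Sq\<in>?Sigma. ?cut ((\<lambda>(S, q) v. if v \<in> S then r else q v) Sq) = Sq"
  proof
    fix Sq assume "Sq \<in> ?Sigma"
    then obtain S q where Sq: "Sq = (S, q)" and S: "S \<subseteq> V - R"
      and q: "q \<in> rooted_forests (V - {r}) (R - {r} \<union> S)" by auto
    have "q v \<noteq> r" if "v \<in> V - R - S" for v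
    proof -
      have "v \<in> V - {r}" "v \<notin> R - {r} \<union> S" using that r by auto
      then show ?thesis using rooted_forests_parent[OF q] by blast
    qed
    then have children: "{v \<in> V - R. (if v \<in> S then r else q v) = r} = S"
      using S by auto
    have "V - {r} - (R - {r} \<union> S) = V - R - S" using r by auto
    then have "restrict (\<lambda>v. if v \<in> S then r else q v) (V - R - S) = q"
      using rooted_forests_undefined[OF q] by (auto simp: restrict_def)
    then show "?cut ((\<lambda>(S, q) v. if v \<in> S then r else q v) Sq) = Sq"
      unfolding Sq prod.case children by simp
  qed
  show "?cut ` rooted_forests V R \<subseteq> ?Sigma"
    using delete_root_forest r by auto
  show "(\<lambda>(S, q) v. if v \<in> S then r else q v) ` ?Sigma \<subseteq> rooted_forests V R"
    using attach_root_forest[OF r RV] by auto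
qed

lemma forest_weight_delete_root:
  assumes "finite V" "r \<in> R" "R \<subseteq> V"
  shows "forest_weight x V R =
    (\<Sum>S\<in>Pow (V - R). x r ^ card S * forest_weight x (V - {r}) (R - {r} \<union> S))"
proof -
  define w where "w = (\<lambda>(S, q). x r ^ card S * (\<Prod>v\<in>V - R - S. x (q v)))"
  have "(\<Prod>v\<in>V - R. x (p v)) = w ({v \<in> V - R. p v = r}, restrict p (V - R - {v \<in> V - R. p v = r}))"
    for p
  proof -
    define S where "S = {v \<in> V - R. p v = r}"
    have "(\<Prod>v\<in>V - R. x (p v)) = (\<Prod>v\<in>S. x (p v)) * (\<Prod>v\<in>V - R - S. x (p v))"
      using assms(1) by (subst mult.commute, intro prod.subset_diff) (auto simp: S_def)
    also have "(\<Prod>v\<in>S. x (p v)) = x r ^ card S"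
      by (simp add: S_def)
    also have "(\<Prod>v\<in>V - R - S. x (p v)) = (\<Prod>v\<in>V - R - S. x (restrict p (V - R - S) v))"
      by simp
    finally show ?thesis by (simp add: w_def S_def)
  qed
  then have "forest_weight x V R
      = (\<Sum>p\<in>rooted_forests V R.
          w ({v \<in> V - R. p v = r}, restrict p (V - R - {v \<in> V - R. p v = r})))"
    by (simp add: forest_weight_def)
  also have "\<dots> = (\<Sum>Sq\<in>(SIGMA S:Pow (V - R). rooted_forests (V - {r}) (R - {r} \<union> S)). w Sq)"
    by (rule sum.reindex_bij_betw[OF bij_betw_delete_root[OF assms(2,3)]])
  also have "\<dots> = (\<Sum>S\<in>Pow (V - R). x r ^ card S * forest_weight x (V - {r}) (R - {r} \<union> S))"
  proof -
    have "V - {r} - (R - {r} \<union> S) = V - R - S" for S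
      using assms(2) by auto
    then show ?thesis
      unfolding w_def using assms(1) by (subst sum.Sigma[symmetric])
        (auto simp: forest_weight_def sum_distrib_left finite_rooted_forests)
  qed
  finally show ?thesis .
qed

lemma sum_Pow_power_card:
  fixes a b :: "'a::comm_semiring_1"
  assumes "finite U"
  shows "(\<Sum>S\<in>Pow U. a ^ card S * b ^ card (U - S)) = (a + b) ^ card U"
  using prod_add[OF assms, of "\<lambda>_. a" "\<lambda>_. b"] by simp

lemma sum_Pow_power_card_sum:
  fixes a b :: "'a::comm_semiring_1"
  assumes "finite U"
  shows "(a + b) * (\<Sum>S\<in>Pow U. a ^ card S * sum x S * b ^ card (U - S))
    = a * sum x U * (a + b) ^ card U"
  using assms
proof (induction U rule: finite_induct)
  case (insert u U)
  define s where "s = (\<Sum>S\<in>Pow U. a ^ card S * sum x S * b ^ card (U - S))"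
  have without_u: "card (insert u U - S) = Suc (card (U - S))" if "S \<in> Pow U" for S
    using insert that by (subst insert_Diff_if) auto
  have with_u: "a ^ card (insert u S) * sum x (insert u S) * b ^ card (insert u U - insert u S)
      = a * x u * (a ^ card S * b ^ card (U - S)) + a * (a ^ card S * sum x S * b ^ card (U - S))"
    if "S \<in> Pow U" for S
  proof -
    have "u \<notin> S" "finite S" "insert u U - insert u S = U - S"
      using insert that finite_subset[of S U] by auto
    then show ?thesis by (simp add: algebra_simps)
  qed
  have "(\<Sum>S\<in>Pow (insert u U). a ^ card S * sum x S * b ^ card (insert u U - S))
      = (\<Sum>S\<in>Pow U. a ^ card S * sum x S * b ^ card (insert u U - S))
        + (\<Sum>S\<in>Pow U. a ^ card (insert u S) * sum x (insert u S)
            * b ^ card (insert u U - insert u S))"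
  proof -
    have "Pow U \<inter> insert u ` Pow U = {}" "inj_on (insert u) (Pow U)"
      using insert by (auto simp: inj_on_def)
    then show ?thesis
      unfolding Pow_insert using insert by (simp add: sum.union_disjoint sum.reindex)
  qed
  also have "(\<Sum>S\<in>Pow U. a ^ card S * sum x S * b ^ card (insert u U - S)) = b * s"
    unfolding s_def sum_distrib_left by (rule sum.cong) (simp_all add: without_u mult_ac)
  also have "(\<Sum>S\<in>Pow U. a ^ card (insert u S) * sum x (insert u S)
        * b ^ card (insert u U - insert u S)) = a * x u * (a + b) ^ card U + a * s"
    by (simp only: sum.cong[OF refl with_u] sum.distrib sum_distrib_left[symmetric] s_def
        sum_Pow_power_card[OF insert(1)])
  finally have "(a + b) * (\<Sum>S\<in>Pow (insert u U). a ^ card S * sum x S * b ^ card (insert u U - S))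
      = (a + b) * ((a + b) * s) + a * x u * (a + b) ^ Suc (card U)"
    by (simp add: algebra_simps)
  also have "\<dots> = a * sum x (insert u U) * (a + b) ^ card (insert u U)"
    using insert by (simp add: s_def algebra_simps)
  finally show ?case .
qed simp

lemma sum_Pow_power_card_affine:
  fixes a s c :: real
  assumes "finite U" "a > 0" "s > 0" "sum x U = s - c"
  shows "(\<Sum>S\<in>Pow U. a ^ card S * ((c + sum x S) * s ^ card (U - S) / s))
    = (a + c) * (a + s) ^ card U / (a + s)"
proof -
  have "(\<Sum>S\<in>Pow U. a ^ card S * ((c + sum x S) * s ^ card (U - S) / s))
      = (c * (\<Sum>S\<in>Pow U. a ^ card S * s ^ card (U - S))
        + (\<Sum>S\<in>Pow U. a ^ card S * sum x S * s ^ card (U - S))) / s"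
    by (simp add: sum_distrib_left sum_divide_distrib sum.distrib algebra_simps add_divide_distrib)
  also have "\<dots> = (c * (a + s) ^ card U + a * (s - c) * (a + s) ^ card U / (a + s)) / s"
    using sum_Pow_power_card[OF assms(1), of a s] sum_Pow_power_card_sum[OF assms(1), of a s x]
      assms
    by (simp add: nonzero_eq_divide_eq mult.commute)
  also have "\<dots> = (a + c) * (a + s) ^ card U / (a + s)"
  proof -
    have "c * (a + s) ^ card U + a * (s - c) * (a + s) ^ card U / (a + s)
        = s * ((a + c) * (a + s) ^ card U / (a + s))"
      using assms by (simp add: field_simps)
    then show ?thesis using assms by simp
  qed
  finally show ?thesis .
qed

lemma forest_weight_formula_step:
  assumes V: "finite V" "R \<subseteq> V" "\<And>v. v \<in> V \<Longrightarrow> x v > 0" and r: "r \<in> R" "V \<noteq> {r}"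
    and IH: "\<And>R'. R' \<subseteq> V - {r} \<Longrightarrow>
      forest_weight x (V - {r}) R'
        = sum x R' * sum x (V - {r}) ^ card (V - {r} - R') / sum x (V - {r})"
  shows "forest_weight x V R = sum x R * sum x V ^ card (V - R) / sum x V"
proof -
  define U where "U = V - R"
  define s where "s = sum x (V - {r})"
  have "r \<in> V" "finite U" "finite (R - {r})" using V r finite_subset by (auto simp: U_def)
  have "s > 0"
    using V r \<open>r \<in> V\<close> unfolding s_def by (intro sum_pos) auto
  have "V - {r} = (R - {r}) \<union> U" "(R - {r}) \<inter> U = {}"
    using V r by (auto simp: U_def)
  then have U: "sum x U = s - sum x (R - {r})"
    using \<open>finite U\<close> \<open>finite (R - {r})\<close> by (simp add: s_def sum.union_disjoint)
  have "forest_weight x (V - {r}) (R - {r} \<union> S)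
      = (sum x (R - {r}) + sum x S) * s ^ card (U - S) / s" if "S \<subseteq> U" for S
  proof -
    have "V - {r} - (R - {r} \<union> S) = U - S" "finite S" "(R - {r}) \<inter> S = {}"
      using r that \<open>finite U\<close> finite_subset by (auto simp: U_def)
    moreover have "R - {r} \<union> S \<subseteq> V - {r}" using that V r by (auto simp: U_def)
    ultimately show ?thesis
      using IH \<open>finite (R - {r})\<close> by (simp add: s_def sum.union_disjoint)
  qed
  then have "forest_weight x V R
      = (\<Sum>S\<in>Pow U. x r ^ card S * ((sum x (R - {r}) + sum x S) * s ^ card (U - S) / s))"
    using forest_weight_delete_root[OF V(1) r(1) V(2), of x] by (simp add: U_def)
  also have "\<dots> = (x r + sum x (R - {r})) * (x r + s) ^ card U / (x r + s)"
    using sum_Pow_power_card_affine[OF \<open>finite U\<close> _ \<open>s > 0\<close> U] V(3) \<open>r \<in> V\<close> by simp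
  finally show ?thesis
    using V(1) finite_subset[OF V(2)] r \<open>r \<in> V\<close> by (simp add: U_def s_def sum.remove)
qed

theorem forest_weight_formula:
  assumes "finite V" "V \<noteq> {}" "R \<subseteq> V" "\<And>v. v \<in> V \<Longrightarrow> x v > 0"
  shows "forest_weight x V R = sum x R * sum x V ^ card (V - R) / sum x V"
  using assms
proof (induction "card V" arbitrary: V R rule: less_induct)
  case less
  show ?case
  proof (cases "R = {}")
    case True
    then show ?thesis
      using rooted_forests_no_roots[OF less.prems(2)] by (simp add: forest_weight_def)
  next
    case False
    then obtain r where r: "r \<in> R" by auto
    show ?thesis
    proof (cases "V = {r}")
      case True
      then have "R = {r}" using r less.prems(3) by auto
      then show ?thesis
        using True less.prems(4) by (simp add: forest_weight_def rooted_forests_all_roots)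
    next
      case False
      have "r \<in> V" using r less.prems(3) by auto
      show ?thesis
      proof (rule forest_weight_formula_step[OF less.prems(1,3,4) r False])
        fix R' assume "R' \<subseteq> V - {r}"
        moreover have "card (V - {r}) < card V"
          using less.prems(1) \<open>r \<in> V\<close> by (rule card_Diff1_less)
        ultimately show "forest_weight x (V - {r}) R'
            = sum x R' * sum x (V - {r}) ^ card (V - {r} - R') / sum x (V - {r})"
          using less.hyps[of "V - {r}" R'] less.prems False \<open>r \<in> V\<close> by auto
      qed
    qed
  qed
qed

lemma card_rooted_forests:
  assumes "finite V" "V \<noteq> {}" "R \<subseteq> V"
  shows "real (card (rooted_forests V R))
    = real (card R) * real (card V) ^ card (V - R) / real (card V)"
  using forest_weight_formula[OF assms, of "\<lambda>_. 1"] by (simp add: forest_weight_def)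

section \<open>Spanning trees as parent maps\<close>

lemma cyclic_neighbour_indices:
  fixes L i :: nat
  assumes "3 \<le> L" "i < L"
  shows "(i + 1) mod L \<noteq> i" "(i + L - 1) mod L \<noteq> i" "(i + L - 1) mod L \<noteq> (i + 1) mod L"
    "((i + L - 1) mod L + 1) mod L = i"
proof -
  consider "i = 0" | "0 < i" "Suc i < L" | "Suc i = L" using assms by linarith
  then have "(i + 1) mod L \<noteq> i \<and> (i + L - 1) mod L \<noteq> i \<and> (i + L - 1) mod L \<noteq> (i + 1) mod L
      \<and> ((i + L - 1) mod L + 1) mod L = i"
  proof cases
    case 1
    then show ?thesis using assms by simp
  next
    case 2
    then have "i + L - 1 = (i - 1) + L" by simp
    then have "(i + L - 1) mod L = (i - 1 + L) mod L" by (rule arg_cong)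
    also have "\<dots> = i - 1" using assms by simp
    finally show ?thesis using 2 by auto
  next
    case 3
    then have "i + L - 1 = (L - 2) + L" using assms by simp
    then have "(i + L - 1) mod L = (L - 2 + L) mod L" by (rule arg_cong)
    also have "\<dots> = L - 2" using assms by (subst mod_add_self2) simp
    finally show ?thesis using 3 assms by auto
  qed
  then show "(i + 1) mod L \<noteq> i" "(i + L - 1) mod L \<noteq> i" "(i + L - 1) mod L \<noteq> (i + 1) mod L"
    "((i + L - 1) mod L + 1) mod L = i" by blast+
qed

lemma is_cycle_neighbours:
  assumes "is_cycle F vs" "v \<in> set vs"
  obtains u w where "{v, u} \<in> F" "{v, w} \<in> F" "u \<noteq> v" "w \<noteq> v" "u \<noteq> w"
    "u \<in> set vs" "w \<in> set vs"
proof -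
  define L where "L = length vs"
  obtain i where i: "i < L" "vs ! i = v"
    using assms(2) by (auto simp: L_def in_set_conv_nth)
  have L: "3 \<le> L" "distinct vs" and edge: "\<And>j. j < L \<Longrightarrow> {vs ! j, vs ! ((j + 1) mod L)} \<in> F"
    using assms(1) by (auto simp: is_cycle_def L_def)
  define j where "j = (i + L - 1) mod L"
  have "j < L" "(i + 1) mod L < L" using L(1) by (auto simp: j_def)
  then have "vs ! ((i + 1) mod L) \<noteq> v" "vs ! j \<noteq> v" "vs ! ((i + 1) mod L) \<noteq> vs ! j"
    using cyclic_neighbour_indices[OF L(1) i(1)] i L(2)
    by (auto simp: j_def L_def nth_eq_iff_index_eq)
  moreover have "{v, vs ! j} \<in> F"
    using edge[OF \<open>j < L\<close>] cyclic_neighbour_indices(4)[OF L(1) i(1)] i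
    by (simp add: j_def insert_commute)
  moreover have "vs ! ((i + 1) mod L) \<in> set vs" "vs ! j \<in> set vs"
    using \<open>j < L\<close> \<open>(i + 1) mod L < L\<close> by (simp_all add: L_def)
  ultimately show ?thesis
    using that edge[OF i(1)] i(2) by blast
qed

lemma is_cycleI:
  assumes "3 \<le> length vs" "distinct vs" "successively (\<lambda>x y. {x, y} \<in> F) vs"
    and "{last vs, hd vs} \<in> F"
  shows "is_cycle F vs"
  unfolding is_cycle_def
proof (intro conjI allI impI assms(1,2))
  fix i assume i: "i < length vs"
  show "{vs ! i, vs ! ((i + 1) mod length vs)} \<in> F"
  proof (cases "Suc i < length vs")
    case True
    then show ?thesis using successively_nth[OF assms(3)] by simp
  next
    case False
    then have "Suc i = length vs" using i by simp
    then have "i = length vs - 1" "(i + 1) mod length vs = 0" by auto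
    moreover have "vs \<noteq> []" using assms(1) by auto
    ultimately show ?thesis using assms(4) by (simp add: last_conv_nth hd_conv_nth)
  qed
qed

definition parent_edges :: "'a set \<Rightarrow> ('a \<Rightarrow> 'a) \<Rightarrow> 'a set set" where
  "parent_edges U p = (\<lambda>v. {v, p v}) ` U"

lemma adj_rel_sym: "sym (adj_rel F)"
  unfolding adj_rel_def sym_def by (auto simp: insert_commute)

definition ancestors :: "('a \<Rightarrow> 'a) \<Rightarrow> nat \<Rightarrow> 'a \<Rightarrow> 'a list" where
  "ancestors p k v = map (\<lambda>i. (p ^^ i) v) [0..<k]"

context
  fixes p V c
  assumes forest: "p \<in> rooted_forests V {c}" and c: "c \<in> V"
begin

lemma parent_edge_from_deeper:
  assumes "{x, y} \<in> parent_edges (V - {c}) p" "x \<noteq> y" "depth p {c} y \<le> depth p {c} x"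
  shows "x \<in> V - {c} \<and> y = p x"
proof -
  obtain w where w: "w \<in> V - {c}" "{x, y} = {w, p w}"
    using assms(1) by (auto simp: parent_edges_def)
  show ?thesis
  proof (cases "w = x")
    case False
    then have "x = p w" "y = w" using w assms(2) by (auto simp: doubleton_eq_iff)
    then show ?thesis using depth_parent[OF forest, of w] w assms(3) by auto
  qed (use w assms(2) in \<open>auto simp: doubleton_eq_iff\<close>)
qed

lemma graph_connected_parent_edges: "graph_connected V (parent_edges (V - {c}) p)"
proof -
  have "(u, c) \<in> (adj_rel (parent_edges (V - {c}) p))\<^sup>*" if "u \<in> V" for u
    using forest that
  proof (induction rule: rooted_forest_induct)
    case (parent u)
    then have "(u, p u) \<in> adj_rel (parent_edges (V - {c}) p)"
      by (auto simp: adj_rel_def parent_edges_def)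
    then show ?case using parent.IH by (rule converse_rtrancl_into_rtrancl)
  qed simp
  then show ?thesis
    unfolding graph_connected_def
    using sym_rtrancl[OF adj_rel_sym] by (meson rtrancl_trans symD)
qed

text \<open>Both cycle neighbours of a deepest vertex of a cycle would have to be its parent.\<close>
lemma graph_acyclic_parent_edges: "graph_acyclic (parent_edges (V - {c}) p)"
  unfolding graph_acyclic_def
proof
  assume "\<exists>vs. is_cycle (parent_edges (V - {c}) p) vs"
  then obtain vs where cycle: "is_cycle (parent_edges (V - {c}) p) vs" ..
  then have "set vs \<noteq> {}" by (auto simp: is_cycle_def)
  then have "Max (depth p {c} ` set vs) \<in> depth p {c} ` set vs"
    by (intro Max_in) auto
  then obtain v where v: "v \<in> set vs" "depth p {c} v = Max (depth p {c} ` set vs)"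
    by (metis imageE)
  have deepest: "depth p {c} w \<le> depth p {c} v" if "w \<in> set vs" for w
    unfolding v(2) using that by simp
  obtain u w where "{v, u} \<in> parent_edges (V - {c}) p" "{v, w} \<in> parent_edges (V - {c}) p"
    "u \<noteq> v" "w \<noteq> v" "u \<noteq> w" "u \<in> set vs" "w \<in> set vs"
    using is_cycle_neighbours[OF cycle v(1)] by blast
  then show False
    using parent_edge_from_deeper deepest by metis
qed

lemma is_tree_parent_edges: "is_tree V (parent_edges (V - {c}) p)"
  unfolding is_tree_def
  using c rooted_forests_parent[OF forest] parent_neq[OF forest]
    graph_connected_parent_edges graph_acyclic_parent_edges
  by (fastforce simp: parent_edges_def)

lemma distinct_ancestors:
  assumes "v \<in> V" "k \<le> Suc (depth p {c} v)"
  shows "distinct (ancestors p k v)"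
proof -
  have "inj_on (\<lambda>i. (p ^^ i) v) {0..<k}"
  proof (rule inj_onI)
    fix i j assume "i \<in> {0..<k}" "j \<in> {0..<k}" "(p ^^ i) v = (p ^^ j) v"
    then show "i = j"
      using depth_funpow[OF forest assms(1), of i] depth_funpow[OF forest assms(1), of j] assms(2)
      by fastforce
  qed
  then show ?thesis by (simp add: ancestors_def distinct_map)
qed

lemma ancestors_walk:
  assumes "v \<in> V" "k \<le> Suc (depth p {c} v)"
  shows "successively (\<lambda>x y. {x, y} \<in> parent_edges (V - {c}) p) (ancestors p k v)"
  unfolding successively_conv_nth
proof (intro allI impI)
  fix i assume "Suc i < length (ancestors p k v)"
  then have "i < depth p {c} v" "Suc i < k" using assms(2) by (simp_all add: ancestors_def)
  then have "(p ^^ i) v \<in> V - {c}"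
    using funpow_le_depth_in[OF forest assms(1)] funpow_less_depth_notin_roots[OF forest] by auto
  then show "{ancestors p k v ! i, ancestors p k v ! Suc i} \<in> parent_edges (V - {c}) p"
    using \<open>Suc i < k\<close> by (auto simp: parent_edges_def ancestors_def)
qed

lemma first_common_ancestor:
  assumes "a \<in> V" "b \<in> V"
  obtains i j where "i \<le> depth p {c} a" "j \<le> depth p {c} b" "(p ^^ i) a = (p ^^ j) b"
    "\<And>i' j'. i' < i \<Longrightarrow> j' \<le> depth p {c} b \<Longrightarrow> (p ^^ i') a \<noteq> (p ^^ j') b"
proof -
  define common where "common = (\<lambda>i. \<exists>j \<le> depth p {c} b. (p ^^ i) a = (p ^^ j) b)"
  have "common (depth p {c} a)"
    using funpow_depth_in_roots[OF forest] assms by (auto simp: common_def)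
  then have "common (LEAST i. common i)" "(LEAST i. common i) \<le> depth p {c} a"
    by (auto intro: LeastI Least_le)
  moreover have "\<And>i' j'. i' < (LEAST i. common i) \<Longrightarrow> j' \<le> depth p {c} b \<Longrightarrow> (p ^^ i') a \<noteq> (p ^^ j') b"
    using not_less_Least common_def by blast
  ultimately show ?thesis using that common_def by blast
qed

lemma distinct_ancestors_to_common:
  assumes "a \<in> V" "b \<in> V" "i \<le> depth p {c} a" "j \<le> depth p {c} b" "(p ^^ i) a = (p ^^ j) b"
    and first: "\<And>i' j'. i' < i \<Longrightarrow> j' \<le> depth p {c} b \<Longrightarrow> (p ^^ i') a \<noteq> (p ^^ j') b"
  shows "distinct (ancestors p (Suc i) a @ rev (ancestors p j b))"
proof -
  have "distinct (ancestors p (Suc j) b)"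
    using distinct_ancestors[OF assms(2)] assms(4) by simp
  then have "distinct (ancestors p j b)" "(p ^^ j) b \<notin> set (ancestors p j b)"
    by (simp_all add: ancestors_def)
  moreover have "distinct (ancestors p (Suc i) a)"
    using distinct_ancestors[OF assms(1)] assms(3) by simp
  moreover have "(p ^^ i') a \<noteq> (p ^^ j') b" if "i' \<le> i" "j' < j" for i' j'
  proof (cases "i' = i")
    case True
    then show ?thesis using assms(5) \<open>(p ^^ j) b \<notin> set (ancestors p j b)\<close> that
      by (auto simp: ancestors_def)
  qed (use first that assms(4) in simp)
  then have "set (ancestors p (Suc i) a) \<inter> set (ancestors p j b) = {}"
    by (auto simp: ancestors_def)
  ultimately show ?thesis by simp
qed

lemma parent_edges_path:
  assumes "a \<in> V" "b \<in> V"
  obtains vs where "hd vs = a" "last vs = b" "vs \<noteq> []" "distinct vs"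
    "successively (\<lambda>x y. {x, y} \<in> parent_edges (V - {c}) p) vs"
proof -
  obtain i j where ij: "i \<le> depth p {c} a" "j \<le> depth p {c} b" "(p ^^ i) a = (p ^^ j) b"
    and first: "\<And>i' j'. i' < i \<Longrightarrow> j' \<le> depth p {c} b \<Longrightarrow> (p ^^ i') a \<noteq> (p ^^ j') b"
    using first_common_ancestor[OF assms] by metis
  define up where "up = ancestors p (Suc i) a"
  define down where "down = rev (ancestors p j b)"
  have "successively (\<lambda>x y. {x, y} \<in> parent_edges (V - {c}) p) up"
    unfolding up_def by (rule ancestors_walk[OF assms(1)]) (use ij(1) in simp)
  moreover have "successively (\<lambda>x y. {x, y} \<in> parent_edges (V - {c}) p) down"
    using ancestors_walk[OF assms(2), of j] ij(2) by (simp add: down_def insert_commute)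
  moreover have "{last up, hd down} \<in> parent_edges (V - {c}) p" if "down \<noteq> []"
  proof -
    from that obtain j' where j': "j = Suc j'" by (cases j) (simp_all add: down_def ancestors_def)
    then have "(p ^^ j') b \<in> V - {c}"
      using ij(2) funpow_le_depth_in[OF forest assms(2)] funpow_less_depth_notin_roots[OF forest]
      by auto
    moreover have "last up = p ((p ^^ j') b)" "hd down = (p ^^ j') b"
      using ij(3) j' by (simp_all add: up_def down_def hd_rev ancestors_def)
    ultimately show ?thesis by (auto simp: parent_edges_def insert_commute)
  qed
  ultimately have "successively (\<lambda>x y. {x, y} \<in> parent_edges (V - {c}) p) (up @ down)"
    by (auto simp: successively_append_iff)
  moreover have "hd (up @ down) = a" "up @ down \<noteq> []"
    by (simp_all add: up_def ancestors_def upt_conv_Cons del: upt_Suc)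
  moreover have "last (up @ down) = b"
    using ij(3) by (cases j) (simp_all add: up_def down_def ancestors_def last_rev upt_conv_Cons)
  moreover have "distinct (up @ down)"
    unfolding up_def down_def using distinct_ancestors_to_common[OF assms ij first] .
  ultimately show ?thesis using that by blast
qed

text \<open>The tree path from \<open>a\<close> to \<open>b\<close>, closed by the extra edge.\<close>
lemma cycle_through_non_parent_edge:
  assumes sub: "parent_edges (V - {c}) p \<subseteq> T"
    and ab: "{a, b} \<in> T" "a \<in> V" "b \<in> V" "a \<noteq> b" "{a, b} \<notin> parent_edges (V - {c}) p"
  shows "\<exists>vs. is_cycle T vs"
proof -
  obtain vs where vs: "hd vs = a" "last vs = b" "vs \<noteq> []" "distinct vs"
    and walk: "successively (\<lambda>x y. {x, y} \<in> parent_edges (V - {c}) p) vs"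
    using parent_edges_path[OF ab(2,3)] .
  have "3 \<le> length vs"
  proof (rule ccontr)
    assume "\<not> 3 \<le> length vs"
    with vs(3) have "vs = [hd vs] \<or> vs = [hd vs, last vs]"
      by (cases vs; cases "tl vs") (auto simp: Suc_le_eq)
    then show False
      using vs ab(4,5) walk by (metis successively.simps(3) list.sel(1) last_ConsL)
  qed
  moreover have "successively (\<lambda>x y. {x, y} \<in> T) vs"
    using walk sub by (auto intro: successively_mono)
  moreover have "{last vs, hd vs} \<in> T"
    using ab(1) vs by (simp add: insert_commute)
  ultimately have "is_cycle T vs"
    using vs(4) by (intro is_cycleI)
  then show ?thesis ..
qed

end

lemma inj_on_parent_edges: "inj_on (parent_edges (V - {c})) (rooted_forests V {c})"
proof (rule inj_onI)
  fix p q assume p: "p \<in> rooted_forests V {c}" and q: "q \<in> rooted_forests V {c}"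
    and same: "parent_edges (V - {c}) p = parent_edges (V - {c}) q"
  have agree: "v \<noteq> c \<longrightarrow> p v = q v" if "v \<in> V" for v
    using q that
  proof (induction rule: rooted_forest_induct)
    case (parent v)
    show ?case
    proof (rule ccontr)
      assume "\<not> ?case"
      then have "p v \<noteq> q v" by simp
      have "{v, q v} \<in> parent_edges (V - {c}) p"
        using same parent.hyps by (auto simp: parent_edges_def)
      then obtain u where "u \<in> V - {c}" "{v, q v} = {u, p u}"
        by (auto simp: parent_edges_def)
      with \<open>p v \<noteq> q v\<close> have "q v \<in> V - {c}" "p (q v) = v"
        by (auto simp: doubleton_eq_iff)
      \<comment> \<open>so \<open>q\<close> swaps \<open>v\<close> and \<open>q v\<close>, which is impossible as depths decrease along \<open>q\<close>\<close>
      with parent.IH have "q (q v) = v" by simp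
      then show False
        using depth_parent[OF q, of v] depth_parent[OF q, of "q v"] parent.hyps \<open>q v \<in> V - {c}\<close>
        by simp
    qed
  qed simp
  show "p = q"
  proof (intro ext)
    fix v
    show "p v = q v"
      using agree rooted_forests_undefined[OF p, of v] rooted_forests_undefined[OF q, of v]
      by (cases "v \<in> V - {c}") auto
  qed
qed

lemma spanning_parent_map:
  assumes "graph_connected V T" "\<And>e. e \<in> T \<Longrightarrow> \<exists>x y. e = {x, y} \<and> x \<in> V \<and> y \<in> V" "c \<in> V"
  obtains p where "p \<in> rooted_forests V {c}" "parent_edges (V - {c}) p \<subseteq> T"
proof -
  define dist where "dist = (\<lambda>v. LEAST k. (v, c) \<in> adj_rel T ^^ k)"
  have towards_c: "\<exists>u. {v, u} \<in> T \<and> u \<in> V \<and> dist u < dist v" if v: "v \<in> V - {c}" for v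
  proof -
    obtain k where "(v, c) \<in> adj_rel T ^^ k"
      using assms(1,3) v rtrancl_power unfolding graph_connected_def by blast
    then have path: "(v, c) \<in> adj_rel T ^^ dist v"
      unfolding dist_def by (rule LeastI)
    then obtain k where k: "dist v = Suc k"
      using v by (cases "dist v") auto
    with path obtain u where u: "(v, u) \<in> adj_rel T" "(u, c) \<in> adj_rel T ^^ k"
      using relpow_Suc_D2 by metis
    then have "dist u \<le> k" unfolding dist_def by (intro Least_le)
    moreover have "u \<in> V"
    proof -
      obtain x y where "{v, u} = {x, y}" "x \<in> V" "y \<in> V"
        using u(1) assms(2)[of "{v, u}"] by (auto simp: adj_rel_def)
      then show ?thesis by (auto simp: doubleton_eq_iff)
    qed
    ultimately show ?thesis using u(1) k by (auto simp: adj_rel_def)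
  qed
  define p where "p = restrict (\<lambda>v. SOME u. {v, u} \<in> T \<and> u \<in> V \<and> dist u < dist v) (V - {c})"
  have p: "{v, p v} \<in> T \<and> p v \<in> V \<and> dist (p v) < dist v" if "v \<in> V - {c}" for v
    unfolding p_def using that someI_ex[OF towards_c[OF that]] by simp
  have "reaches p {c} v" if "v \<in> V" for v
    using that
  proof (induction "dist v" arbitrary: v rule: less_induct)
    case less
    then show ?case
      using p[of v] reaches_step[of p "{c}" v] by (cases "v = c") (auto simp: reaches_base)
  qed
  then have "p \<in> rooted_forests V {c}"
    using p by (intro rooted_forestsI) (auto simp: p_def)
  moreover have "parent_edges (V - {c}) p \<subseteq> T"
    using p by (auto simp: parent_edges_def)
  ultimately show ?thesis using that by blast
qed

lemma bij_betw_parent_edges: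
  assumes "c \<in> V"
  shows "bij_betw (parent_edges (V - {c})) (rooted_forests V {c}) {T. is_tree V T}"
  unfolding bij_betw_def
proof (intro conjI inj_on_parent_edges subset_antisym subsetI)
  show "T \<in> parent_edges (V - {c}) ` rooted_forests V {c}" if "T \<in> {T. is_tree V T}" for T
  proof -
    have tree: "is_tree V T" using that by simp
    then have T: "graph_connected V T" "graph_acyclic T"
      "\<And>e. e \<in> T \<Longrightarrow> \<exists>x y. e = {x, y} \<and> x \<in> V \<and> y \<in> V"
      by (auto simp: is_tree_def)
    obtain p where p: "p \<in> rooted_forests V {c}" "parent_edges (V - {c}) p \<subseteq> T"
      using spanning_parent_map[OF T(1,3) assms] .
    have "e \<in> parent_edges (V - {c}) p" if "e \<in> T" for e
    proof (rule ccontr)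
      assume "e \<notin> parent_edges (V - {c}) p"
      moreover obtain x y where "e = {x, y}" "x \<in> V" "y \<in> V" "x \<noteq> y"
        using \<open>e \<in> T\<close> tree unfolding is_tree_def by blast
      ultimately show False
        using cycle_through_non_parent_edge[OF p(1) assms p(2)] \<open>e \<in> T\<close> T(2)
        by (auto simp: graph_acyclic_def)
    qed
    with p show ?thesis by blast
  qed
qed (use is_tree_parent_edges assms in auto)

lemma card_trees_satisfying:
  assumes "c \<in> V"
  shows "card {T. is_tree V T \<and> Q T}
    = card {p \<in> rooted_forests V {c}. Q (parent_edges (V - {c}) p)}"
proof -
  have bij: "bij_betw (parent_edges (V - {c})) (rooted_forests V {c}) {T. is_tree V T}"
    using bij_betw_parent_edges[OF assms] .
  have "inj_on (parent_edges (V - {c})) {p \<in> rooted_forests V {c}. Q (parent_edges (V - {c}) p)}"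
    using bij_betw_imp_inj_on[OF bij] by (rule inj_on_subset) auto
  then have "card {p \<in> rooted_forests V {c}. Q (parent_edges (V - {c}) p)}
      = card (parent_edges (V - {c}) ` {p \<in> rooted_forests V {c}. Q (parent_edges (V - {c}) p)})"
    by (rule card_image[symmetric])
  also have "parent_edges (V - {c}) ` {p \<in> rooted_forests V {c}. Q (parent_edges (V - {c}) p)}
      = {T \<in> parent_edges (V - {c}) ` rooted_forests V {c}. Q T}"
    by blast
  also have "\<dots> = {T. is_tree V T \<and> Q T}"
    using bij by (auto simp: bij_betw_def)
  finally show ?thesis ..
qed

theorem card_trees_Cayley:
  assumes "finite V" "V \<noteq> {}"
  shows "card {T. is_tree V T} = card V ^ (card V - 2)"
proof -
  obtain c where c: "c \<in> V" using assms(2) by blast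
  have "real (card {T. is_tree V T}) = real (card (rooted_forests V {c}))"
    using card_trees_satisfying[OF c, of "\<lambda>_. True"] by simp
  also have "\<dots> = real (card V) ^ (card V - 1) / real (card V)"
    using card_rooted_forests[OF assms, of "{c}"] c assms(1) by simp
  also have "\<dots> = real (card V) ^ (card V - 2)"
  proof -
    obtain N where "card V = Suc N"
      using assms card_gt_0_iff[of V] gr0_implies_Suc by blast
    then show ?thesis by (cases N) simp_all
  qed
  finally show ?thesis by (simp flip: of_nat_power)
qed

section \<open>Forests extending a given forest\<close>

definition root_of :: "('a \<Rightarrow> 'a) \<Rightarrow> 'a set \<Rightarrow> 'a \<Rightarrow> 'a" where
  "root_of g Y v = (g ^^ depth g Y v) v"

context
  fixes V Y R g
  assumes finite: "finite V" and YV: "Y \<subseteq> V" and RY: "R \<subseteq> Y" and forest: "g \<in> rooted_forests V Y"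
begin

lemma root_of_in: "v \<in> V \<Longrightarrow> root_of g Y v \<in> Y"
  unfolding root_of_def by (rule funpow_depth_in_roots[OF forest])

lemma root_of_root: "y \<in> Y \<Longrightarrow> root_of g Y y = y"
  unfolding root_of_def by (simp add: depth_root[OF forest])

lemma root_of_parent: "v \<in> V \<Longrightarrow> v \<notin> Y \<Longrightarrow> root_of g Y (g v) = root_of g Y v"
  unfolding root_of_def by (simp add: depth_parent[OF forest] funpow_Suc_right del: funpow.simps)

lemma reaches_root_of:
  assumes below: "\<And>w. w \<in> V - Y \<Longrightarrow> p w = g w" and "v \<in> V" "reaches p R (root_of g Y v)"
  shows "reaches p R v"
  using forest assms(2,3)
proof (induction rule: rooted_forest_induct)
  case (root v)
  then show ?case by (simp add: root_of_root)
next
  case (parent v)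
  then have "reaches p R (g v)" by (simp add: root_of_parent)
  then show ?case using below[of v] parent.hyps reaches_step[of p R v] by simp
qed

lemma contracted_forest:
  assumes p: "p \<in> rooted_forests V R" and below: "\<And>w. w \<in> V - Y \<Longrightarrow> p w = g w"
  shows "restrict (root_of g Y \<circ> p) (Y - R) \<in> rooted_forests Y R"
proof -
  define e where "e = restrict (root_of g Y \<circ> p) (Y - R)"
  have "v \<in> V \<longrightarrow> reaches e R (root_of g Y v)" if "v \<in> V" for v
    using p that
  proof (induction rule: rooted_forest_induct)
    case (root v)
    then show ?case using RY by (auto simp: root_of_root reaches_base)
  next
    case (parent v)
    have "p v \<in> V" using rooted_forests_parent[OF p] parent.hyps by blast
    show ?case
    proof (cases "v \<in> Y")
      case True
      then have "e v = root_of g Y (p v)" using parent.hyps by (simp add: e_def)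
      then show ?thesis
        using True parent \<open>p v \<in> V\<close> reaches_step[of e R v] by (simp add: root_of_root)
    next
      case False
      then have "root_of g Y (p v) = root_of g Y v"
        using below parent.hyps root_of_parent by simp
      then show ?thesis using parent.IH \<open>p v \<in> V\<close> by simp
    qed
  qed
  then have "reaches e R y" if "y \<in> Y" for y
    using that YV root_of_root[OF that] by (metis subsetD)
  then show ?thesis
    unfolding e_def[symmetric]
    using rooted_forests_parent[OF p] root_of_in RY YV
    by (intro rooted_forestsI) (auto simp: e_def)
qed

lemma extended_forest:
  assumes e: "e \<in> rooted_forests Y R"
    and h: "h \<in> (\<Pi>\<^sub>E y\<in>Y - R. {v \<in> V. root_of g Y v = e y})"
  shows "(\<lambda>v. if v \<in> V - Y then g v else h v) \<in> rooted_forests V R"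
proof -
  define p where "p = (\<lambda>v. if v \<in> V - Y then g v else h v)"
  have below: "\<And>w. w \<in> V - Y \<Longrightarrow> p w = g w" by (simp add: p_def)
  have "reaches p R y" if "y \<in> Y" for y
    using e that
  proof (induction rule: rooted_forest_induct)
    case (root y)
    then show ?case by (rule reaches_base)
  next
    case (parent y)
    then have "h y \<in> V" "e y = root_of g Y (h y)" "p y = h y"
      using h by (auto simp: p_def PiE_iff)
    then show ?case
      using parent.IH reaches_root_of[OF below] reaches_step by metis
  qed
  then have "reaches p R v" if "v \<in> V" for v
    using that reaches_root_of[OF below that] root_of_in by blast
  then show ?thesis
    unfolding p_def[symmetric]
    using h rooted_forests_parent[OF forest] rooted_forests_undefined[OF forest] RY YV
    by (intro rooted_forestsI) (auto simp: p_def PiE_iff extensional_def)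
qed

text \<open>A forest with roots \<open>R\<close> that agrees with \<open>g\<close> below \<open>Y\<close> is determined by the parents
  \<open>h y\<close> of the vertices \<open>y \<in> Y - R\<close>; contracting every tree of \<open>g\<close> to its root turns it into
  the forest \<open>e\<close> on \<open>Y\<close> with \<open>e y = root_of g Y (h y)\<close>.\<close>
lemma bij_betw_extensions:
  "bij_betw (\<lambda>p. (restrict (root_of g Y \<circ> p) (Y - R), restrict p (Y - R)))
     {p \<in> rooted_forests V R. restrict p (V - Y) = g}
     (SIGMA e:rooted_forests Y R. \<Pi>\<^sub>E y\<in>Y - R. {v \<in> V. root_of g Y v = e y})"
    (is "bij_betw ?split ?Ext ?Sigma")
proof (rule bij_betw_byWitness[where f' = "\<lambda>(e, h) v. if v \<in> V - Y then g v else h v"])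
  show "\<forall>p\<in>?Ext. (\<lambda>(e, h) v. if v \<in> V - Y then g v else h v) (?split p) = p"
  proof (intro ballI ext)
    fix p v assume p: "p \<in> ?Ext"
    then show "(\<lambda>(e, h) v. if v \<in> V - Y then g v else h v) (?split p) v = p v"
      using rooted_forests_undefined[of p V R v] RY by (cases "v \<in> V - Y") auto
  qed
  show "\<forall>eh\<in>?Sigma. ?split ((\<lambda>(e, h) v. if v \<in> V - Y then g v else h v) eh) = eh"
  proof
    fix eh assume "eh \<in> ?Sigma"
    then obtain e h where eh: "eh = (e, h)" "e \<in> rooted_forests Y R"
      and h: "h \<in> (\<Pi>\<^sub>E y\<in>Y - R. {v \<in> V. root_of g Y v = e y})" by auto
    have "restrict (root_of g Y \<circ> (\<lambda>v. if v \<in> V - Y then g v else h v)) (Y - R) = e"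
      using h rooted_forests_undefined[OF eh(2)] by (auto simp: restrict_def PiE_iff)
    moreover have "restrict (\<lambda>v. if v \<in> V - Y then g v else h v) (Y - R) = h"
      using h by (auto simp: restrict_def PiE_iff extensional_def)
    ultimately show "?split ((\<lambda>(e, h) v. if v \<in> V - Y then g v else h v) eh) = eh"
      by (simp add: eh)
  qed
  show "?split ` ?Ext \<subseteq> ?Sigma"
  proof (rule image_subsetI)
    fix p assume "p \<in> ?Ext"
    then have p: "p \<in> rooted_forests V R" and "restrict p (V - Y) = g" by auto
    then have "p w = g w" if "w \<in> V - Y" for w
      using that by (metis restrict_apply')
    then show "?split p \<in> ?Sigma"
      using contracted_forest[OF p] rooted_forests_parent[OF p] YV by auto
  qed
  show "(\<lambda>(e, h) v. if v \<in> V - Y then g v else h v) ` ?Sigma \<subseteq> ?Ext"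
    using extended_forest rooted_forests_undefined[OF forest] by (auto simp: restrict_def)
qed

lemma sum_card_root_of_fibres: "(\<Sum>y\<in>Y. card {v \<in> V. root_of g Y v = y}) = card V"
  unfolding card_eq_sum
  by (rule sum.group[OF finite finite_subset[OF YV finite]]) (use root_of_in in auto)

lemma card_extensions:
  assumes "Y \<noteq> {}"
  shows "real (card {p \<in> rooted_forests V R. restrict p (V - Y) = g}) =
    (\<Sum>y\<in>R. real (card {v \<in> V. root_of g Y v = y})) * real (card V) ^ card (Y - R) / real (card V)"
proof -
  define x where "x = (\<lambda>y. real (card {v \<in> V. root_of g Y v = y}))"
  have "finite Y" using YV finite finite_subset by blast
  have "card {p \<in> rooted_forests V R. restrict p (V - Y) = g}
      = card (SIGMA e:rooted_forests Y R. \<Pi>\<^sub>E y\<in>Y - R. {v \<in> V. root_of g Y v = e y})"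
    using bij_betw_extensions by (rule bij_betw_same_card)
  also have "\<dots> = (\<Sum>e\<in>rooted_forests Y R. \<Prod>y\<in>Y - R. card {v \<in> V. root_of g Y v = e y})"
    using \<open>finite Y\<close> finite by (simp add: card_SigmaI finite_rooted_forests finite_PiE card_PiE)
  finally have "real (card {p \<in> rooted_forests V R. restrict p (V - Y) = g}) = forest_weight x Y R"
    by (simp add: forest_weight_def x_def)
  also have "\<dots> = sum x R * sum x Y ^ card (Y - R) / sum x Y"
  proof (rule forest_weight_formula[OF \<open>finite Y\<close> assms RY])
    fix y assume "y \<in> Y"
    then have "y \<in> {v \<in> V. root_of g Y v = y}" using YV root_of_root by auto
    then show "x y > 0" using finite by (auto simp: x_def card_gt_0_iff)
  qed
  also have "sum x Y = real (card V)"
    unfolding x_def of_nat_sum[symmetric] sum_card_root_of_fibres ..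
  finally show ?thesis unfolding x_def .
qed

end

section \<open>Trees avoiding the edges between two sets\<close>

definition cross_edges :: "'a set \<Rightarrow> 'a set \<Rightarrow> 'a set set" where
  "cross_edges A B = {{a, b} | a b. a \<in> A \<and> b \<in> B}"

definition separated :: "'a set \<Rightarrow> 'a set \<Rightarrow> ('a \<Rightarrow> 'a) \<Rightarrow> bool" where
  "separated A B p \<longleftrightarrow> (\<forall>v\<in>A. p v \<notin> B) \<and> (\<forall>v\<in>B. p v \<notin> A)"

lemma parent_edges_disjoint_cross_edges_iff:
  assumes "A \<subseteq> V - {c}" "B \<subseteq> V - {c}"
  shows "parent_edges (V - {c}) p \<inter> cross_edges A B = {} \<longleftrightarrow> separated A B p"
proof
  assume "parent_edges (V - {c}) p \<inter> cross_edges A B = {}"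
  then have "{v, p v} \<notin> cross_edges A B" if "v \<in> A \<union> B" for v
    using that assms by (auto simp: parent_edges_def)
  then show "separated A B p"
    unfolding separated_def cross_edges_def by (auto simp: insert_commute)
next
  assume sep: "separated A B p"
  show "parent_edges (V - {c}) p \<inter> cross_edges A B = {}"
  proof (rule ccontr)
    assume "parent_edges (V - {c}) p \<inter> cross_edges A B \<noteq> {}"
    then obtain v a b where "{v, p v} = {a, b}" "a \<in> A" "b \<in> B"
      by (auto simp: parent_edges_def cross_edges_def)
    then show False
      using sep by (auto simp: separated_def doubleton_eq_iff)
  qed
qed

context
  fixes A B C :: "'a set"
  assumes disjoint: "A \<inter> B = {}" "A \<inter> C = {}" "B \<inter> C = {}"
begin

lemma glued_forest:
  assumes g1: "g1 \<in> rooted_forests (A \<union> C) C" and g2: "g2 \<in> rooted_forests (B \<union> C) C"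
  shows "(\<lambda>v. if v \<in> A then g1 v else g2 v) \<in> rooted_forests (A \<union> B \<union> C) C"
    and "separated A B (\<lambda>v. if v \<in> A then g1 v else g2 v)"
proof -
  define g where "g = (\<lambda>v. if v \<in> A then g1 v else g2 v)"
  have in1: "g1 v \<in> A \<union> C" if "v \<in> A" for v
    using rooted_forests_parent[OF g1] that disjoint by blast
  have in2: "g2 v \<in> B \<union> C" if "v \<in> B" for v
    using rooted_forests_parent[OF g2] that disjoint by blast
  have "reaches g C v" if "v \<in> A \<union> B \<union> C" for v
  proof (cases "v \<in> A \<union> C")
    case True
    with rooted_forests_reaches[OF g1 True] show ?thesis
      by (rule reaches_cong) (auto simp: g_def dest: in1)
  next
    case False
    then have "v \<in> B \<union> C" using that by blast
    with rooted_forests_reaches[OF g2 this] show ?thesis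
      by (rule reaches_cong) (use disjoint in2 in \<open>auto simp: g_def\<close>)
  qed
  then show "g \<in> rooted_forests (A \<union> B \<union> C) C"
    using in1 in2 rooted_forests_undefined[OF g2] disjoint
    by (intro rooted_forestsI) (auto simp: g_def)
  show "separated A B g"
    using disjoint by (auto simp: separated_def g_def disjoint_iff dest: in1 in2)
qed

lemma restrict_separated_forest:
  assumes g: "g \<in> rooted_forests (A \<union> B \<union> C) C" and "separated A B g"
  shows "restrict g A \<in> rooted_forests (A \<union> C) C" "restrict g B \<in> rooted_forests (B \<union> C) C"
proof -
  have "A \<union> C - C = A" "B \<union> C - C = B" using disjoint by auto
  moreover have "g v \<in> A \<union> C" if "v \<in> A" for v
    using rooted_forests_parent[OF g, of v] that disjoint \<open>separated A B g\<close>
    by (auto simp: separated_def)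
  then have "restrict g (A \<union> C - C) \<in> rooted_forests (A \<union> C) C"
    by (intro restrict_rooted_forest[OF g]) auto
  moreover have "g v \<in> B \<union> C" if "v \<in> B" for v
    using rooted_forests_parent[OF g, of v] that disjoint \<open>separated A B g\<close>
    by (auto simp: separated_def)
  then have "restrict g (B \<union> C - C) \<in> rooted_forests (B \<union> C) C"
    by (intro restrict_rooted_forest[OF g]) auto
  ultimately show "restrict g A \<in> rooted_forests (A \<union> C) C"
    and "restrict g B \<in> rooted_forests (B \<union> C) C"
    by simp_all
qed

lemma card_separated_forests:
  "card {g \<in> rooted_forests (A \<union> B \<union> C) C. separated A B g}
    = card (rooted_forests (A \<union> C) C) * card (rooted_forests (B \<union> C) C)"
proof -
  have "bij_betw (\<lambda>g. (restrict g A, restrict g B))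
      {g \<in> rooted_forests (A \<union> B \<union> C) C. separated A B g}
      (rooted_forests (A \<union> C) C \<times> rooted_forests (B \<union> C) C)"
  proof (rule bij_betw_byWitness[where f' = "\<lambda>(g1, g2) v. if v \<in> A then g1 v else g2 v"])
    show "\<forall>g\<in>{g \<in> rooted_forests (A \<union> B \<union> C) C. separated A B g}.
        (\<lambda>(g1, g2) v. if v \<in> A then g1 v else g2 v) (restrict g A, restrict g B) = g"
    proof (intro ballI ext)
      fix g v assume "g \<in> {g \<in> rooted_forests (A \<union> B \<union> C) C. separated A B g}"
      then show "(\<lambda>(g1, g2) v. if v \<in> A then g1 v else g2 v) (restrict g A, restrict g B) v = g v"
        using rooted_forests_undefined[of g _ C v] by auto
    qed
    show "\<forall>gg\<in>rooted_forests (A \<union> C) C \<times> rooted_forests (B \<union> C) C.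
        (\<lambda>g. (restrict g A, restrict g B)) ((\<lambda>(g1, g2) v. if v \<in> A then g1 v else g2 v) gg) = gg"
    proof
      fix gg assume "gg \<in> rooted_forests (A \<union> C) C \<times> rooted_forests (B \<union> C) C"
      then obtain g1 g2 where gg: "gg = (g1, g2)"
        and g1: "g1 \<in> rooted_forests (A \<union> C) C" and g2: "g2 \<in> rooted_forests (B \<union> C) C" by auto
      have "restrict (\<lambda>v. if v \<in> A then g1 v else g2 v) A = g1"
        using rooted_forests_undefined[OF g1] disjoint by (auto simp: restrict_def)
      moreover have "restrict (\<lambda>v. if v \<in> A then g1 v else g2 v) B = g2"
        using rooted_forests_undefined[OF g2] disjoint by (auto simp: restrict_def disjoint_iff)
      ultimately show "(\<lambda>g. (restrict g A, restrict g B))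
          ((\<lambda>(g1, g2) v. if v \<in> A then g1 v else g2 v) gg) = gg" by (simp add: gg)
    qed
    show "(\<lambda>(g1, g2) v. if v \<in> A then g1 v else g2 v)
        ` (rooted_forests (A \<union> C) C \<times> rooted_forests (B \<union> C) C)
        \<subseteq> {g \<in> rooted_forests (A \<union> B \<union> C) C. separated A B g}"
      using glued_forest by auto
    show "(\<lambda>g. (restrict g A, restrict g B)) ` {g \<in> rooted_forests (A \<union> B \<union> C) C. separated A B g}
        \<subseteq> rooted_forests (A \<union> C) C \<times> rooted_forests (B \<union> C) C"
      using restrict_separated_forest by auto
  qed
  then show ?thesis by (simp add: bij_betw_same_card card_cartesian_product)
qed

lemma separated_forests_by_cut:
  assumes c: "c \<in> C"
  shows "{p \<in> rooted_forests (A \<union> B \<union> C) {c}. separated A B p}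
    = (\<Union>g\<in>{g \<in> rooted_forests (A \<union> B \<union> C) C. separated A B g}.
        {p \<in> rooted_forests (A \<union> B \<union> C) {c}. restrict p (A \<union> B \<union> C - C) = g})"
proof (intro subset_antisym subsetI)
  fix p assume "p \<in> {p \<in> rooted_forests (A \<union> B \<union> C) {c}. separated A B p}"
  then have p: "p \<in> rooted_forests (A \<union> B \<union> C) {c}" and "separated A B p" by auto
  have "restrict p (A \<union> B \<union> C - C) \<in> rooted_forests (A \<union> B \<union> C) C"
    using c rooted_forests_parent[OF p] by (intro restrict_rooted_forest[OF p]) auto
  moreover have "separated A B (restrict p (A \<union> B \<union> C - C))"
    using \<open>separated A B p\<close> disjoint by (auto simp: separated_def disjoint_iff)
  ultimately show "p \<in> (\<Union>g\<in>{g \<in> rooted_forests (A \<union> B \<union> C) C. separated A B g}.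
      {p \<in> rooted_forests (A \<union> B \<union> C) {c}. restrict p (A \<union> B \<union> C - C) = g})"
    using p by blast
next
  fix p assume "p \<in> (\<Union>g\<in>{g \<in> rooted_forests (A \<union> B \<union> C) C. separated A B g}.
      {p \<in> rooted_forests (A \<union> B \<union> C) {c}. restrict p (A \<union> B \<union> C - C) = g})"
  then obtain g where "separated A B g" "p \<in> rooted_forests (A \<union> B \<union> C) {c}"
    "restrict p (A \<union> B \<union> C - C) = g" by blast
  moreover have "restrict p (A \<union> B \<union> C - C) v = p v" if "v \<in> A \<union> B" for v
    using that disjoint by (auto simp: disjoint_iff)
  ultimately show "p \<in> {p \<in> rooted_forests (A \<union> B \<union> C) {c}. separated A B p}"
    by (auto simp: separated_def)
qed

lemma sum_card_separated_forests_single_root: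
  assumes finite: "finite A" "finite B" "finite C" and "C \<noteq> {}"
  shows "(\<Sum>c\<in>C. real (card {p \<in> rooted_forests (A \<union> B \<union> C) {c}. separated A B p}))
    = real (card {g \<in> rooted_forests (A \<union> B \<union> C) C. separated A B g})
      * real (card (A \<union> B \<union> C)) ^ (card C - 1)"
proof -
  define V where "V = A \<union> B \<union> C"
  define G where "G = {g \<in> rooted_forests V C. separated A B g}"
  define fibre where "fibre = (\<lambda>g c. real (card {v \<in> V. root_of g C v = c}))"
  have V: "finite V" "C \<subseteq> V" "V \<noteq> {}" using finite assms(4) by (auto simp: V_def)
  have "finite G" using finite_rooted_forests[OF V(1)] by (simp add: G_def)
  have "real (card {p \<in> rooted_forests V {c}. separated A B p})
      = (\<Sum>g\<in>G. fibre g c) * real (card V) ^ (card C - 1) / real (card V)" if c: "c \<in> C" for c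
  proof -
    have "card {p \<in> rooted_forests V {c}. separated A B p}
        = (\<Sum>g\<in>G. card {p \<in> rooted_forests V {c}. restrict p (V - C) = g})"
      unfolding separated_forests_by_cut[OF c, folded V_def] G_def
      using V(1) by (intro card_UN_disjoint) (auto simp: finite_rooted_forests)
    also have "real \<dots> = (\<Sum>g\<in>G. fibre g c * real (card V) ^ (card C - 1) / real (card V))"
      using card_extensions[OF V(1,2), of "{c}"] c finite(3) assms(4)
      by (simp add: G_def fibre_def)
    finally show ?thesis by (simp add: sum_distrib_right sum_divide_distrib)
  qed
  then have "(\<Sum>c\<in>C. real (card {p \<in> rooted_forests V {c}. separated A B p}))
      = (\<Sum>g\<in>G. \<Sum>c\<in>C. fibre g c) * real (card V) ^ (card C - 1) / real (card V)"
    by (simp add: sum_distrib_right sum_divide_distrib sum.swap[of _ C])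
  also have "(\<Sum>g\<in>G. \<Sum>c\<in>C. fibre g c) = (\<Sum>g\<in>G. real (card V))"
    using sum_card_root_of_fibres[OF V(1,2) order.refl]
    by (intro sum.cong) (simp_all add: G_def fibre_def flip: of_nat_sum)
  also have "(\<Sum>g\<in>G. real (card V)) * real (card V) ^ (card C - 1) / real (card V)
      = real (card G) * real (card V) ^ (card C - 1)"
    using V by (simp add: card_gt_0_iff)
  finally show ?thesis unfolding V_def G_def .
qed

end

theorem card_trees_avoiding_cross_edges:
  assumes finite: "finite A" "finite B" "finite C"
    and disjoint: "A \<inter> B = {}" "A \<inter> C = {}" "B \<inter> C = {}" and "C \<noteq> {}"
  shows "real (card {T. is_tree (A \<union> B \<union> C) T \<and> T \<inter> cross_edges A B = {}})
    = real (card C) * real (card (A \<union> C)) ^ card A * real (card (B \<union> C)) ^ card B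
        * real (card (A \<union> B \<union> C)) ^ card C
      / (real (card (A \<union> C)) * real (card (B \<union> C)) * real (card (A \<union> B \<union> C)))"
proof -
  define V where "V = A \<union> B \<union> C"
  define t where "t = real (card {T. is_tree V T \<and> T \<inter> cross_edges A B = {}})"
  define m where "m = real (card C)"
  define a where "a = real (card (A \<union> C))"
  define b where "b = real (card (B \<union> C))"
  define n where "n = real (card V)"
  have "m > 0" "a > 0" "b > 0" "n > 0"
    using finite \<open>C \<noteq> {}\<close> by (auto simp: m_def a_def b_def n_def V_def card_gt_0_iff)
  have same: "real (card {p \<in> rooted_forests V {c}. separated A B p}) = t" if "c \<in> C" for c
  proof -
    have "c \<in> V" "A \<subseteq> V - {c}" "B \<subseteq> V - {c}" using that disjoint by (auto simp: V_def)
    then show ?thesis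
      unfolding t_def card_trees_satisfying[OF \<open>c \<in> V\<close>]
      by (simp add: parent_edges_disjoint_cross_edges_iff)
  qed
  have "m * t = (\<Sum>c\<in>C. real (card {p \<in> rooted_forests V {c}. separated A B p}))"
    by (simp add: m_def same cong: sum.cong)
  also have "\<dots> = real (card {g \<in> rooted_forests V C. separated A B g}) * n ^ (card C - 1)"
    using sum_card_separated_forests_single_root[OF disjoint finite \<open>C \<noteq> {}\<close>]
    by (simp add: n_def V_def)
  also have "real (card {g \<in> rooted_forests V C. separated A B g})
      = (m * a ^ card A / a) * (m * b ^ card B / b)"
  proof -
    have "A \<union> C - C = A" "B \<union> C - C = B" using disjoint by auto
    then show ?thesis
      using card_separated_forests[OF disjoint] finite \<open>C \<noteq> {}\<close>
        card_rooted_forests[of "A \<union> C" C] card_rooted_forests[of "B \<union> C" C]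
      by (simp add: V_def m_def a_def b_def)
  qed
  also have "n ^ (card C - 1) = n ^ card C / n"
    using \<open>n > 0\<close> \<open>m > 0\<close> by (simp add: m_def power_eq_if)
  finally have "m * t = m * (m * a ^ card A * b ^ card B * n ^ card C / (a * b * n))"
    by (simp add: field_simps)
  then have "t = m * a ^ card A * b ^ card B * n ^ card C / (a * b * n)"
    using \<open>m > 0\<close> by (subst (asm) mult_cancel_left) simp
  then show ?thesis by (simp add: t_def m_def a_def b_def n_def V_def)
qed

lemma tree_meets_cross_edges:
  assumes tree: "is_tree (A \<union> B) T" and "a \<in> A" "b \<in> B" "A \<inter> B = {}"
  shows "T \<inter> cross_edges A B \<noteq> {}"
proof
  assume none: "T \<inter> cross_edges A B = {}"
  have "y \<in> A" if "(a, y) \<in> (adj_rel T)\<^sup>*" for y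
    using that
  proof (induction rule: rtrancl_induct)
    case (step x y)
    then have "{x, y} \<in> T" by (simp add: adj_rel_def)
    then have "y \<in> A \<union> B" using tree by (auto simp: is_tree_def doubleton_eq_iff)
    moreover have "{x, y} \<notin> cross_edges A B" using none \<open>{x, y} \<in> T\<close> by blast
    ultimately show ?case using step.IH by (auto simp: cross_edges_def)
  qed (rule \<open>a \<in> A\<close>)
  moreover have "(a, b) \<in> (adj_rel T)\<^sup>*"
    using tree \<open>a \<in> A\<close> \<open>b \<in> B\<close> by (auto simp: is_tree_def graph_connected_def)
  ultimately show False using \<open>b \<in> B\<close> \<open>A \<inter> B = {}\<close> by blast
qed

section \<open>Spanning trees of the complete graph\<close>

lemma spanning_trees_K_eq: "spanning_trees_K n = {T. is_tree {1..n} T}"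
  unfolding spanning_trees_K_def complete_edges_def is_tree_def by auto

lemma prob_spanning_trees_K:
  assumes "n \<ge> 1"
  shows "measure_pmf.prob (pmf_of_set (spanning_trees_K n)) {T. P T}
    = real (card {T. is_tree {1..n} T \<and> P T}) / real n ^ (n - 2)"
proof -
  have "card (spanning_trees_K n) = n ^ (n - 2)"
    using card_trees_Cayley[of "{1..n}"] assms by (simp add: spanning_trees_K_eq)
  then have "spanning_trees_K n \<noteq> {}" "finite (spanning_trees_K n)"
    using assms card_gt_0_iff by fastforce+
  then have "measure_pmf.prob (pmf_of_set (spanning_trees_K n)) {T. P T}
      = real (card (spanning_trees_K n \<inter> {T. P T})) / real (card (spanning_trees_K n))"
    by (rule measure_pmf_of_set)
  also have "spanning_trees_K n \<inter> {T. P T} = {T. is_tree {1..n} T \<and> P T}"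
    by (auto simp: spanning_trees_K_eq)
  finally show ?thesis
    using \<open>card (spanning_trees_K n) = n ^ (n - 2)\<close> by simp
qed

lemma card_trees_avoiding_blocks:
  fixes n k l :: nat
  assumes "k \<ge> 1" "l \<ge> 1" "k + l < n"
  shows "card {T. is_tree {1..n} T \<and> T \<inter> cross_edges {1..k} {n - l<..n} = {}}
    = (n - k - l) * (n - l) ^ (k - 1) * (n - k) ^ (l - 1) * n ^ (n - k - l - 1)"
proof -
  have "{1..k} \<union> {n - l<..n} \<union> {k<..n - l} = {1..n}" "{1..k} \<union> {k<..n - l} = {1..n - l}"
    "{n - l<..n} \<union> {k<..n - l} = {k<..n}"
    using assms by auto
  then have cards: "card ({1..k} \<union> {n - l<..n} \<union> {k<..n - l}) = n"
    "card ({1..k} \<union> {k<..n - l}) = n - l" "card ({n - l<..n} \<union> {k<..n - l}) = n - k"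
    "card {1..k} = k" "card {n - l<..n} = l" "card {k<..n - l} = n - k - l"
    using assms by simp_all
  have "{1..k} \<inter> {n - l<..n} = {}" "{1..k} \<inter> {k<..n - l} = {}" "{n - l<..n} \<inter> {k<..n - l} = {}"
    "{k<..n - l} \<noteq> {}"
    using assms by auto
  from card_trees_avoiding_cross_edges[OF _ _ _ this]
  have "real (card {T. is_tree {1..n} T \<and> T \<inter> cross_edges {1..k} {n - l<..n} = {}})
      = real (n - k - l) * real (n - l) ^ k * real (n - k) ^ l * real n ^ (n - k - l)
        / (real (n - l) * real (n - k) * real n)"
    unfolding cards \<open>{1..k} \<union> {n - l<..n} \<union> {k<..n - l} = {1..n}\<close> by simp
  also have "\<dots> = real ((n - k - l) * (n - l) ^ (k - 1) * (n - k) ^ (l - 1) * n ^ (n - k - l - 1))"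
  proof -
    obtain k' l' m' where "k = Suc k'" "l = Suc l'" "n - k - l = Suc m'"
      using assms by (cases k; cases l; cases "n - k - l") auto
    moreover have "real (n - l) \<noteq> 0" "real (n - k) \<noteq> 0" "real n \<noteq> 0" using assms by auto
    ultimately show ?thesis by (simp del: of_nat_diff add: field_simps)
  qed
  finally show ?thesis by (simp only: of_nat_eq_iff)
qed

lemma no_trees_avoiding_blocks:
  fixes n k l :: nat
  assumes "k \<ge> 1" "l \<ge> 1" "k + l = n"
  shows "{T. is_tree {1..n} T \<and> T \<inter> cross_edges {1..k} {n - l<..n} = {}} = {}"
proof -
  have "n - l = k" using assms by simp
  then have "{1..n} = {1..k} \<union> {n - l<..n}" "{1..k} \<inter> {n - l<..n} = {}"
    "1 \<in> {1..k}" "n \<in> {n - l<..n}"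
    using assms by auto
  then have "T \<inter> cross_edges {1..k} {n - l<..n} \<noteq> {}" if "is_tree {1..n} T" for T
    using tree_meets_cross_edges[of "{1..k}" "{n - l<..n}" T 1 n] that by simp
  then show ?thesis by blast
qed

theorem lemma2p8:
  fixes n k l :: nat
  assumes "k \<ge> 1" and "l \<ge> 1" and "k + l \<le> n"
  shows "measure_pmf.prob (pmf_of_set (spanning_trees_K n))
           {T. T \<inter> {{i, j} | i j. 1 \<le> i \<and> i \<le> k \<and> n - l < j \<and> j \<le> n} = {}}
         = (real (n - k) ^ (l - 1) * real (n - l) ^ (k - 1) * real (n - k - l))
           / real n ^ (k + l - 1)"
proof -
  have "{{i, j} | i j. 1 \<le> i \<and> i \<le> k \<and> n - l < j \<and> j \<le> n} = cross_edges {1..k} {n - l<..n}"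
    by (auto simp: cross_edges_def)
  then have prob: "measure_pmf.prob (pmf_of_set (spanning_trees_K n))
        {T. T \<inter> {{i, j} | i j. 1 \<le> i \<and> i \<le> k \<and> n - l < j \<and> j \<le> n} = {}}
      = card {T. is_tree {1..n} T \<and> T \<inter> cross_edges {1..k} {n - l<..n} = {}} / real n ^ (n - 2)"
    using prob_spanning_trees_K[of n "\<lambda>T. T \<inter> cross_edges {1..k} {n - l<..n} = {}"] assms by simp
  show ?thesis
  proof (cases "k + l = n")
    case True
    then show ?thesis unfolding prob no_trees_avoiding_blocks[OF assms(1,2) True] by simp
  next
    case False
    define e m where "e = k + l - 1" and "m = n - k - l - 1"
    have "k + l < n" "n - 2 = e + m" "real n \<noteq> 0" using assms False by (auto simp: e_def m_def)
    then show ?thesis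
      unfolding prob card_trees_avoiding_blocks[OF assms(1,2) \<open>k + l < n\<close>]
      unfolding e_def[symmetric] m_def[symmetric] \<open>n - 2 = e + m\<close> power_add
      by (simp del: of_nat_diff add: field_simps)
  qed
qed

end
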